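(* Consider the asynchronous Sinkhorn iteration described in the context, started from any $v^{(0)}\in\mathbb R_{++}^Y$. Then: (i) $u^{(\ell)}$ and $\alpha^{(\ell)}=\varepsilon\log u^{(\ell)}$ are (componentwise) nondecreasing in $\ell$, $v^{(\ell)}$ and $\beta^{(\ell)}=\varepsilon\log v^{(\ell)}$ are nonincreasing in $\ell$, and $q^{(\ell)}$ is nondecreasing in $\ell$; (ii) for every $\ell\ge1$, $\sum_y\pi^{(\ell)}(x,y)\le\mu(x)$ for all $x$ and $\sum_x\pi^{(\ell)}(x,y)\le\nu(y)$ for all $y$; (iii) there exists $y^*\in Y$ with $v^{(\ell)}(y^* )=v^{(0)}(y^* )$ for all $\ell$.
   Context: $X,Y$ finite sets, $\mu\in\mathcal P(X)$, $\nu\in\mathcal P(Y)$ with strictly positive entries, $c\in\mathbb R_+^{X\times Y}$, $\varepsilon>0$, and kernel $K(x,y)=\exp(-c(x,y)/\varepsilon)\mu(x)\nu(y)$. The asynchronous Sinkhorn iteration: given $v^{(0)}\in\mathbb R_{++}^Y$, for $\ell\ge0$ set $u^{(\ell+1)}=\mu\oslash(Kv^{(\ell)})$, $\hat v^{(\ell+1)}=\nu\oslash(K^\top u^{(\ell+1)})$, $v^{(\ell+1)}=\min\{v^{(\ell)},\hat v^{(\ell+1)}\}$ (componentwise minimum), $\pi^{(\ell+1)}=\mathrm{diag}(u^{(\ell+1)})K\mathrm{diag}(v^{(\ell+1)})$, $q^{(\ell+1)}=\sum_{x,y}\pi^{(\ell+1)}(x,y)$. Here $\oslash$ is componentwise division.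 *)

theory Defs
  imports Complex_Main
begin

definition kern :: "('x \<Rightarrow> real) \<Rightarrow> ('y \<Rightarrow> real) \<Rightarrow> ('x \<Rightarrow> 'y \<Rightarrow> real) \<Rightarrow> real
                    \<Rightarrow> 'x \<Rightarrow> 'y \<Rightarrow> real" where
  "kern mu nu c eps x y = exp (- c x y / eps) * mu x * nu y"

definition u_upd :: "('x::finite \<Rightarrow> 'y::finite \<Rightarrow> real) \<Rightarrow> ('x \<Rightarrow> real) \<Rightarrow> ('y \<Rightarrow> real) \<Rightarrow> 'x \<Rightarrow> real" where
  "u_upd K mu v = (\<lambda>x. mu x / (\<Sum>y\<in>UNIV. K x y * v y))"

definition v_upd :: "('x::finite \<Rightarrow> 'y::finite \<Rightarrow> real) \<Rightarrow> ('y \<Rightarrow> real) \<Rightarrow> ('x \<Rightarrow> real) \<Rightarrow> 'y \<Rightarrow> real" where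
  "v_upd K nu u = (\<lambda>y. nu y / (\<Sum>x\<in>UNIV. K x y * u x))"

primrec async_v :: "('x::finite \<Rightarrow> 'y::finite \<Rightarrow> real) \<Rightarrow> ('x \<Rightarrow> real) \<Rightarrow> ('y \<Rightarrow> real)
                    \<Rightarrow> ('y \<Rightarrow> real) \<Rightarrow> nat \<Rightarrow> 'y \<Rightarrow> real" where
  "async_v K mu nu v0 0 = v0"
| "async_v K mu nu v0 (Suc l) =
     (let v = async_v K mu nu v0 l;
          u = u_upd K mu v;
          vh = v_upd K nu u
      in (\<lambda>y. min (v y) (vh y)))"

text \<open>u^(l) for l >= 1: u^(l) = mu ./ (K v^(l-1)). (u^(0) is not used.)\<close>
definition async_u :: "('x::finite \<Rightarrow> 'y::finite \<Rightarrow> real) \<Rightarrow> ('x \<Rightarrow> real) \<Rightarrow> ('y \<Rightarrow> real)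
                    \<Rightarrow> ('y \<Rightarrow> real) \<Rightarrow> nat \<Rightarrow> 'x \<Rightarrow> real" where
  "async_u K mu nu v0 l = u_upd K mu (async_v K mu nu v0 (l - 1))"

definition async_pi :: "('x::finite \<Rightarrow> 'y::finite \<Rightarrow> real) \<Rightarrow> ('x \<Rightarrow> real) \<Rightarrow> ('y \<Rightarrow> real)
                    \<Rightarrow> ('y \<Rightarrow> real) \<Rightarrow> nat \<Rightarrow> 'x \<Rightarrow> 'y \<Rightarrow> real" where
  "async_pi K mu nu v0 l x y = async_u K mu nu v0 l x * K x y * async_v K mu nu v0 l y"

definition async_q :: "('x::finite \<Rightarrow> 'y::finite \<Rightarrow> real) \<Rightarrow> ('x \<Rightarrow> real) \<Rightarrow> ('y \<Rightarrow> real)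
                    \<Rightarrow> ('y \<Rightarrow> real) \<Rightarrow> nat \<Rightarrow> real" where
  "async_q K mu nu v0 l = (\<Sum>x\<in>UNIV. \<Sum>y\<in>UNIV. async_pi K mu nu v0 l x y)"

end

theory Submission
  imports Defs
begin

text \<open>Both half-updates w \<mapsto> mu ./ (K w) and u \<mapsto> nu ./ (K^T u) are antitone, so the full
  Sinkhorn map is monotone. As v only decreases, u = mu ./ (K v) increases; after the min, the
  column sums of the new plan are min (nu, v (K^T u)), which are capped by nu and grow with u,
  giving the marginal bounds and the growth of q. A coordinate that ever drops below v0 follows
  the Sinkhorn map from then on, so if every coordinate moved in one step the map would lie
  below the current iterate everywhere. But the map preserves the weighted mass
  sum_y w(y) (K^T u)(y) (both sides are the common total mass of mu and nu), so the iterate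
  would be a fixed point and nothing would have moved. Hence at every step some coordinate is
  still at its initial value, and by finiteness one coordinate never moves.\<close>

locale positive_kernel =
  fixes K :: "'x::finite \<Rightarrow> 'y::finite \<Rightarrow> real" and mu :: "'x \<Rightarrow> real" and nu :: "'y \<Rightarrow> real"
  assumes K_pos: "K x y > 0" and mu_pos: "mu x > 0" and nu_pos: "nu y > 0"
begin

lemma u_upd_pos:
  assumes "\<And>y. w y > 0"
  shows "u_upd K mu w x > 0"
  unfolding u_upd_def using assms K_pos mu_pos by (intro divide_pos_pos sum_pos) auto

lemma v_upd_pos:
  assumes "\<And>x. w x > 0"
  shows "v_upd K nu w y > 0"
  unfolding v_upd_def using assms K_pos nu_pos by (intro divide_pos_pos sum_pos) auto

lemma u_upd_antimono:
  assumes "\<And>y. w y > 0" and "\<And>y. w y \<le> w' y"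
  shows "u_upd K mu w' x \<le> u_upd K mu w x"
proof -
  have "(\<Sum>y\<in>UNIV. K x y * w y) \<le> (\<Sum>y\<in>UNIV. K x y * w' y)"
    using assms(2) K_pos by (intro sum_mono mult_left_mono) (auto intro: less_imp_le)
  moreover have "(\<Sum>y\<in>UNIV. K x y * w y) > 0"
    using assms(1) K_pos by (intro sum_pos) auto
  ultimately show ?thesis
    unfolding u_upd_def using mu_pos by (intro divide_left_mono) (auto intro: less_imp_le)
qed

lemma v_upd_antimono:
  assumes "\<And>x. w x > 0" and "\<And>x. w x \<le> w' x"
  shows "v_upd K nu w' y \<le> v_upd K nu w y"
proof -
  have "(\<Sum>x\<in>UNIV. K x y * w x) \<le> (\<Sum>x\<in>UNIV. K x y * w' x)"
    using assms(2) K_pos by (intro sum_mono mult_left_mono) (auto intro: less_imp_le)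
  moreover have "(\<Sum>x\<in>UNIV. K x y * w x) > 0"
    using assms(1) K_pos by (intro sum_pos) auto
  ultimately show ?thesis
    unfolding v_upd_def using nu_pos by (intro divide_left_mono) (auto intro: less_imp_le)
qed

definition sinkhorn_map :: "('y \<Rightarrow> real) \<Rightarrow> 'y \<Rightarrow> real" where
  "sinkhorn_map w = v_upd K nu (u_upd K mu w)"

lemma sinkhorn_map_mono:
  assumes "\<And>y. w y > 0" and "\<And>y. w y \<le> w' y"
  shows "sinkhorn_map w y \<le> sinkhorn_map w' y"
proof -
  have "w' y > 0" for y using assms by (meson less_le_trans)
  then show ?thesis
    unfolding sinkhorn_map_def using assms
    by (intro v_upd_antimono u_upd_pos u_upd_antimono)
qed

text \<open>With u = mu ./ (K w), the plan diag(u) K diag(w) has row sums mu and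
  diag(u) K diag(sinkhorn_map w) has column sums nu.\<close>
lemma sinkhorn_map_mass_balance:
  assumes "\<And>y. w y > 0" and mass: "sum mu UNIV = sum nu UNIV"
  defines "u \<equiv> u_upd K mu w"
  shows "(\<Sum>y\<in>UNIV. sinkhorn_map w y * (\<Sum>x\<in>UNIV. K x y * u x))
       = (\<Sum>y\<in>UNIV. w y * (\<Sum>x\<in>UNIV. K x y * u x))"
proof -
  have u_pos: "u x > 0" for x unfolding u_def using assms(1) by (rule u_upd_pos)
  have col: "sinkhorn_map w y * (\<Sum>x\<in>UNIV. K x y * u x) = nu y" for y
  proof -
    have "(\<Sum>x\<in>UNIV. K x y * u x) > 0" using u_pos K_pos by (intro sum_pos) auto
    then show ?thesis unfolding sinkhorn_map_def v_upd_def u_def by simp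
  qed
  have row: "u x * (\<Sum>y\<in>UNIV. K x y * w y) = mu x" for x
  proof -
    have "(\<Sum>y\<in>UNIV. K x y * w y) > 0" using assms(1) K_pos by (intro sum_pos) auto
    then show ?thesis unfolding u_def u_upd_def by simp
  qed
  have "(\<Sum>y\<in>UNIV. sinkhorn_map w y * (\<Sum>x\<in>UNIV. K x y * u x)) = sum mu UNIV"
    using mass by (simp add: col)
  also have "\<dots> = (\<Sum>x\<in>UNIV. u x * (\<Sum>y\<in>UNIV. K x y * w y))"
    by (simp add: row)
  also have "\<dots> = (\<Sum>x\<in>UNIV. \<Sum>y\<in>UNIV. w y * (K x y * u x))"
    by (simp add: sum_distrib_left mult_ac)
  also have "\<dots> = (\<Sum>y\<in>UNIV. w y * (\<Sum>x\<in>UNIV. K x y * u x))"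
    by (subst sum.swap) (simp add: sum_distrib_left)
  finally show ?thesis .
qed

lemma sinkhorn_map_le_imp_eq:
  assumes "\<And>y. w y > 0" and "sum mu UNIV = sum nu UNIV"
    and le: "\<And>y. sinkhorn_map w y \<le> w y"
  shows "sinkhorn_map w = w"
proof (rule ccontr)
  define a where "a y = (\<Sum>x\<in>UNIV. K x y * u_upd K mu w x)" for y
  have a_pos: "a y > 0" for y
    unfolding a_def using K_pos u_upd_pos[OF assms(1)] by (intro sum_pos) auto
  assume "sinkhorn_map w \<noteq> w"
  then obtain y0 where "sinkhorn_map w y0 < w y0" using le by (meson order.not_eq_order_implies_strict ext)
  then have "(\<Sum>y\<in>UNIV. sinkhorn_map w y * a y) < (\<Sum>y\<in>UNIV. w y * a y)"
    using a_pos le by (intro sum_strict_mono_ex1) (auto intro: mult_right_mono less_imp_le)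
  then show False
    using sinkhorn_map_mass_balance[OF assms(1,2)] unfolding a_def by simp
qed

end

locale async_sinkhorn = positive_kernel K mu nu
  for K :: "'x::finite \<Rightarrow> 'y::finite \<Rightarrow> real" and mu nu +
  fixes v0 :: "'y \<Rightarrow> real"
  assumes v0_pos: "v0 y > 0"
begin

abbreviation "v \<equiv> async_v K mu nu v0"
abbreviation "u \<equiv> async_u K mu nu v0"
abbreviation "plan \<equiv> async_pi K mu nu v0"

lemma async_v_Suc: "v (Suc l) y = min (v l y) (sinkhorn_map (v l) y)"
  by (simp add: sinkhorn_map_def Let_def)

declare async_v.simps(2) [simp del]

lemma async_u_Suc: "u (Suc l) = u_upd K mu (v l)"
  by (simp add: async_u_def)

lemma async_v_pos: "v l y > 0"
proof (induction l arbitrary: y)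
  case 0
  then show ?case using v0_pos by simp
next
  case (Suc l)
  then show ?case
    unfolding async_v_Suc sinkhorn_map_def by (simp add: v_upd_pos u_upd_pos)
qed

lemma async_u_pos: "u (Suc l) x > 0"
  unfolding async_u_Suc by (rule u_upd_pos[OF async_v_pos])

lemma async_v_Suc_le: "v (Suc l) y \<le> v l y"
  by (simp add: async_v_Suc)

lemma async_v_antimono: "l \<le> l' \<Longrightarrow> v l' y \<le> v l y"
  by (induction rule: dec_induct) (auto intro: order.trans[OF async_v_Suc_le])

lemma async_v_le_v0: "v l y \<le> v0 y"
  using async_v_antimono[of 0 l y] by simp

lemma async_u_Suc_le: "u (Suc l) x \<le> u (Suc (Suc l)) x"
  unfolding async_u_Suc by (intro u_upd_antimono async_v_pos async_v_Suc_le)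

lemma async_plan_row_sum_le: "(\<Sum>y\<in>UNIV. plan (Suc l) x y) \<le> mu x"
proof -
  have s_pos: "(\<Sum>y\<in>UNIV. K x y * v l y) > 0"
    using K_pos async_v_pos by (intro sum_pos) auto
  have "(\<Sum>y\<in>UNIV. plan (Suc l) x y) = u (Suc l) x * (\<Sum>y\<in>UNIV. K x y * v (Suc l) y)"
    unfolding async_pi_def by (simp add: sum_distrib_left mult_ac)
  also have "\<dots> \<le> u (Suc l) x * (\<Sum>y\<in>UNIV. K x y * v l y)"
    using async_u_pos K_pos
    by (intro mult_left_mono sum_mono) (auto intro: less_imp_le async_v_Suc_le)
  also have "\<dots> = mu x"
    unfolding async_u_Suc u_upd_def using s_pos by simp
  finally show ?thesis .
qed

lemma async_plan_col_sum:
  "(\<Sum>x\<in>UNIV. plan (Suc l) x y) = min (nu y) (v l y * (\<Sum>x\<in>UNIV. K x y * u (Suc l) x))"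
proof -
  have a_pos: "(\<Sum>x\<in>UNIV. K x y * u (Suc l) x) > 0"
    using K_pos async_u_pos by (intro sum_pos) auto
  have "(\<Sum>x\<in>UNIV. plan (Suc l) x y) = v (Suc l) y * (\<Sum>x\<in>UNIV. K x y * u (Suc l) x)"
    unfolding async_pi_def by (simp add: sum_distrib_left mult_ac)
  also have "\<dots> = min (v l y * (\<Sum>x\<in>UNIV. K x y * u (Suc l) x)) (nu y)"
    using a_pos
    by (simp add: async_v_Suc min_mult_distrib_right sinkhorn_map_def v_upd_def flip: async_u_Suc)
  finally show ?thesis by (simp add: min.commute)
qed

lemma async_plan_col_sum_le: "(\<Sum>x\<in>UNIV. plan (Suc l) x y) \<le> nu y"
  by (simp add: async_plan_col_sum)

lemma async_plan_col_sum_mono: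
  "(\<Sum>x\<in>UNIV. plan (Suc l) x y) \<le> (\<Sum>x\<in>UNIV. plan (Suc (Suc l)) x y)"
proof -
  have "(\<Sum>x\<in>UNIV. plan (Suc l) x y) = v (Suc l) y * (\<Sum>x\<in>UNIV. K x y * u (Suc l) x)"
    unfolding async_pi_def by (simp add: sum_distrib_left mult_ac)
  also have "\<dots> \<le> v (Suc l) y * (\<Sum>x\<in>UNIV. K x y * u (Suc (Suc l)) x)"
    using K_pos async_v_pos
    by (intro mult_left_mono sum_mono) (auto intro: less_imp_le async_u_Suc_le)
  finally show ?thesis
    using async_plan_col_sum_le[of l y] by (simp add: async_plan_col_sum[of "Suc l"])
qed

lemma async_q_mono: "async_q K mu nu v0 (Suc l) \<le> async_q K mu nu v0 (Suc (Suc l))"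
  unfolding async_q_def
  by (subst (1 2) sum.swap) (intro sum_mono async_plan_col_sum_mono)

text \<open>A coordinate that has left v0 was set by the Sinkhorn map at its last change, and
  the map only decreases along the iteration, so it has followed the map ever since.\<close>
lemma async_v_below_v0_imp_map:
  "v (Suc l) y < v0 y \<Longrightarrow> v (Suc l) y = sinkhorn_map (v l) y"
proof (induction l)
  case 0
  then show ?case by (simp add: async_v_Suc min_def split: if_splits)
next
  case (Suc l)
  show ?case
  proof (cases "v (Suc l) y < v0 y")
    case True
    have "sinkhorn_map (v (Suc l)) y \<le> sinkhorn_map (v l) y"
      by (intro sinkhorn_map_mono async_v_pos async_v_Suc_le)
    also have "\<dots> = v (Suc l) y"
      using Suc.IH True by simp
    finally show ?thesis by (simp add: async_v_Suc[of "Suc l"] min_def)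
  next
    case False
    then have "v (Suc (Suc l)) y < v (Suc l) y" using Suc.prems by simp
    then show ?thesis by (simp add: async_v_Suc[of "Suc l"] min_def split: if_splits)
  qed
qed

lemma async_v_exists_untouched:
  assumes "sum mu UNIV = sum nu UNIV"
  shows "\<exists>y. v l y = v0 y"
proof (induction l)
  case 0
  then show ?case by simp
next
  case (Suc l)
  then obtain y0 where y0: "v l y0 = v0 y0" by blast
  show ?case
  proof (rule ccontr)
    assume moved: "\<nexists>y. v (Suc l) y = v0 y"
    have "sinkhorn_map (v l) y \<le> v l y" for y
    proof (cases "v l y = v0 y")
      case True
      with moved show ?thesis by (auto simp: async_v_Suc min_def split: if_splits)
    next
      case False
      then have "v l y < v0 y" using async_v_le_v0[of l y] by simp
      then obtain k where k: "l = Suc k" and "v l y = sinkhorn_map (v k) y"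
        using async_v_below_v0_imp_map by (cases l) auto
      moreover have "sinkhorn_map (v l) y \<le> sinkhorn_map (v k) y"
        unfolding k by (intro sinkhorn_map_mono async_v_pos async_v_Suc_le)
      ultimately show ?thesis by simp
    qed
    then have "sinkhorn_map (v l) = v l"
      by (intro sinkhorn_map_le_imp_eq async_v_pos assms)
    then have "v (Suc l) y0 = v0 y0" using y0 by (simp add: async_v_Suc)
    with moved show False by blast
  qed
qed

text \<open>The sets {y. v l y = v0 y} are nonempty and decrease in l; a coordinate that has left
  one of them by step f y is absent from the set at step Max (range f).\<close>
lemma async_v_fixed_coordinate:
  assumes "sum mu UNIV = sum nu UNIV"
  shows "\<exists>y. \<forall>l. v l y = v0 y"
proof (rule ccontr)
  assume "\<not> ?thesis"
  then obtain f where f: "\<And>y. v (f y) y \<noteq> v0 y" by metis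
  define L where "L = Max (range f)"
  obtain y where y: "v L y = v0 y" using async_v_exists_untouched[OF assms] by blast
  have "f y \<le> L" unfolding L_def by (rule Max_ge) auto
  then have "v0 y \<le> v (f y) y" using y async_v_antimono by metis
  then show False using f async_v_le_v0 by (metis order.antisym)
qed

end

theorem mainTheorem3:
  fixes mu :: "'x::finite \<Rightarrow> real" and nu :: "'y::finite \<Rightarrow> real"
    and c :: "'x \<Rightarrow> 'y \<Rightarrow> real" and eps :: real and v0 :: "'y \<Rightarrow> real"
  defines "K \<equiv> kern mu nu c eps"
  defines "u \<equiv> async_u K mu nu v0" and "v \<equiv> async_v K mu nu v0"
    and "P \<equiv> async_pi K mu nu v0" and "q \<equiv> async_q K mu nu v0"
  assumes mu_pos: "\<forall>x. mu x > 0" and mu_sum: "(\<Sum>x\<in>UNIV. mu x) = 1"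
    and nu_pos: "\<forall>y. nu y > 0" and nu_sum: "(\<Sum>y\<in>UNIV. nu y) = 1"
    and c_nonneg: "\<forall>x y. c x y \<ge> 0"
    and eps_pos: "eps > 0"
    and v0_pos: "\<forall>y. v0 y > 0"
  shows "(\<forall>l\<ge>1. \<forall>x. u l x \<le> u (Suc l) x \<and> eps * ln (u l x) \<le> eps * ln (u (Suc l) x))
       \<and> (\<forall>l. \<forall>y. v (Suc l) y \<le> v l y \<and> eps * ln (v (Suc l) y) \<le> eps * ln (v l y))
       \<and> (\<forall>l\<ge>1. q l \<le> q (Suc l))
       \<and> (\<forall>l\<ge>1. (\<forall>x. (\<Sum>y\<in>UNIV. P l x y) \<le> mu x) \<and> (\<forall>y. (\<Sum>x\<in>UNIV. P l x y) \<le> nu y))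
       \<and> (\<exists>ys. \<forall>l. v l ys = v0 ys)"
proof -
  interpret async_sinkhorn K mu nu v0
    using mu_pos nu_pos v0_pos by unfold_locales (auto simp: K_def kern_def)
  have ln_mono: "a \<le> b \<Longrightarrow> a > 0 \<Longrightarrow> eps * ln a \<le> eps * ln b" for a b
    using eps_pos by (intro mult_left_mono) auto
  have from_Suc: "\<forall>l\<ge>1. R l" if "\<And>k. R (Suc k)" for R :: "nat \<Rightarrow> bool"
    using that by (metis One_nat_def Suc_le_D)
  show ?thesis
  proof (intro conjI)
    show "\<forall>l\<ge>1. \<forall>x. u l x \<le> u (Suc l) x \<and> eps * ln (u l x) \<le> eps * ln (u (Suc l) x)"
      by (rule from_Suc) (simp add: u_def async_u_Suc_le async_u_pos ln_mono)
    show "\<forall>l y. v (Suc l) y \<le> v l y \<and> eps * ln (v (Suc l) y) \<le> eps * ln (v l y)"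
      by (simp add: v_def async_v_Suc_le async_v_pos ln_mono)
    show "\<forall>l\<ge>1. q l \<le> q (Suc l)"
      by (rule from_Suc) (simp add: q_def async_q_mono)
    show "\<forall>l\<ge>1. (\<forall>x. (\<Sum>y\<in>UNIV. P l x y) \<le> mu x) \<and> (\<forall>y. (\<Sum>x\<in>UNIV. P l x y) \<le> nu y)"
      by (rule from_Suc) (simp add: P_def async_plan_row_sum_le async_plan_col_sum_le)
    show "\<exists>ys. \<forall>l. v l ys = v0 ys"
      using async_v_fixed_coordinate mu_sum nu_sum by (simp add: v_def)
  qed
qed

end
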